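(* Let $x_i\in K_i$ for every $1\le i\le N$, let $x\in K$, and let $i_0\in\{1,\dots,N\}$ be such that $x\in K_{i_0}$. Then for every integer $m\le 0$ and every $\epsilon>0$ there exist an integer $k\ge m$ and a set $B\in\mathcal{A}_m$ with $P^m_x(B)<\epsilon$ such that for all $\sigma\in\Sigma\setminus B$ and all $n\ge k$, $$d\big(Z^x_{mn}(\sigma),Y^{x_1\dots x_N}_{mn}(\sigma)\big)\le a^{\frac{n-m+1}{2}}\,d(x,x_{i_0}).$$
   Context: A contractive Markov system (CMS) with average contracting rate $0<a<1$ consists of: a finite directed multigraph $(V,E,i,t)$ with vertex set $V=\{1,\dots,N\}$, finite edge set $E$, and maps $i,t:E\to V$ giving the initial and terminal vertex of each edge; a complete metric space $(K,d)$ partitioned into non-empty Borel sets $K_1,\dots,K_N$; Borel measurable maps $w_e:K\to K$ ($e\in E$) with $w_e(K_{i(e)})\subset K_{t(e)}$; Borel measurable functions $p_e:K\to[0,\infty)$ with $\sum_{e\in E}p_e(x)=1$ for all $x\in K$ and $p_e=0$ on $K\setminus K_{i(e)}$; and such that $\sum_{e\in E}p_e(x)d(w_ex,w_ey)\leq a\,d(x,y)$ for all $x,y\in K_j$, $j=1,\dots,N$. Let $\Sigma:=E^{\mathbb{Z}}$. For $m\le n$ the cylinder $_m[e_m,\dots,e_n]:=\{\sigma\in\Sigma:\sigma_j=e_j,\ m\le j\le n\}$. For an integer $m\le 1$, $\mathcal{A}_m$ is the $\sigma$-algebra generated by the cylinders $_m[e_m,\dots,e_n]$, $n\ge m$. For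 $x\in K$, $P^m_x$ is the probability measure on $(\Sigma,\mathcal{A}_m)$ with $P^m_x(_m[e_m,\dots,e_n])=p_{e_m}(x)\,p_{e_{m+1}}(w_{e_m}x)\cdots p_{e_n}(w_{e_{n-1}}\circ\cdots\circ w_{e_m}x)$. For $x\in K$ and $m\le n$, $Z^x_{mn}(\sigma):=w_{\sigma_n}\circ\cdots\circ w_{\sigma_m}(x)$; for fixed $x_i\in K_i$, $Y^{x_1\dots x_N}_{mn}(\sigma):=w_{\sigma_n}\circ\cdots\circ w_{\sigma_m}(x_{i(\sigma_m)})$. *)

theory Defs
  imports "HOL-Analysis.Analysis" "HOL-Probability.Probability"
begin

text \<open>Vertices are 1..N (nat), edges are the elements of a
finite type 'e (E = UNIV), the complete metric space K is the whole type 'a,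
Kset j is K_j, ini/ter are the maps i,t, w e and p e are the maps and probabilities.\<close>

definition cms :: "nat \<Rightarrow> ('e::finite \<Rightarrow> nat) \<Rightarrow> ('e \<Rightarrow> nat) \<Rightarrow> (nat \<Rightarrow> 'a::complete_space set)
    \<Rightarrow> ('e \<Rightarrow> 'a \<Rightarrow> 'a) \<Rightarrow> ('e \<Rightarrow> 'a \<Rightarrow> real) \<Rightarrow> real \<Rightarrow> bool" where
  "cms N ini ter Kset w p a \<longleftrightarrow>
     (\<forall>e. ini e \<in> {1..N} \<and> ter e \<in> {1..N}) \<and>
     (\<forall>j\<in>{1..N}. Kset j \<noteq> {} \<and> Kset j \<in> sets borel) \<and>
     (\<forall>j\<in>{1..N}. \<forall>l\<in>{1..N}. j \<noteq> l \<longrightarrow> Kset j \<inter> Kset l = {}) \<and>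
     (\<Union>j\<in>{1..N}. Kset j) = UNIV \<and>
     (\<forall>e. w e \<in> borel_measurable borel \<and> w e ` Kset (ini e) \<subseteq> Kset (ter e)) \<and>
     (\<forall>e. p e \<in> borel_measurable borel \<and> (\<forall>x. p e x \<ge> 0)
          \<and> (\<forall>x. x \<notin> Kset (ini e) \<longrightarrow> p e x = 0)) \<and>
     (\<forall>x. (\<Sum>e\<in>UNIV. p e x) = 1) \<and>
     0 < a \<and> a < 1 \<and>
     (\<forall>j\<in>{1..N}. \<forall>x\<in>Kset j. \<forall>y\<in>Kset j.
        (\<Sum>e\<in>UNIV. p e x * dist (w e x) (w e y)) \<le> a * dist x y)"

definition cyl :: "int \<Rightarrow> 'e list \<Rightarrow> (int \<Rightarrow> 'e) set" where
  "cyl m es = {\<sigma>. \<forall>j<length es. \<sigma> (m + int j) = es ! j}"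

definition Aalg :: "int \<Rightarrow> (int \<Rightarrow> 'e) measure" where
  "Aalg m = sigma UNIV {cyl m es | es. es \<noteq> []}"

fun cylprob :: "('e \<Rightarrow> 'a \<Rightarrow> real) \<Rightarrow> ('e \<Rightarrow> 'a \<Rightarrow> 'a) \<Rightarrow> 'a \<Rightarrow> 'e list \<Rightarrow> real" where
  "cylprob p w x [] = 1"
| "cylprob p w x (e # es) = p e x * cylprob p w (w e x) es"

fun iterw :: "('e \<Rightarrow> 'a \<Rightarrow> 'a) \<Rightarrow> (int \<Rightarrow> 'e) \<Rightarrow> int \<Rightarrow> nat \<Rightarrow> 'a \<Rightarrow> 'a" where
  "iterw w \<sigma> m 0 x = x"
| "iterw w \<sigma> m (Suc k) x = w (\<sigma> (m + int k)) (iterw w \<sigma> m k x)"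

definition Zmn :: "('e \<Rightarrow> 'a \<Rightarrow> 'a) \<Rightarrow> 'a \<Rightarrow> int \<Rightarrow> int \<Rightarrow> (int \<Rightarrow> 'e) \<Rightarrow> 'a" where
  "Zmn w x m n \<sigma> = iterw w \<sigma> m (nat (n - m + 1)) x"

definition Ymn :: "('e \<Rightarrow> 'a \<Rightarrow> 'a) \<Rightarrow> ('e \<Rightarrow> nat) \<Rightarrow> (nat \<Rightarrow> 'a) \<Rightarrow> int \<Rightarrow> int \<Rightarrow> (int \<Rightarrow> 'e) \<Rightarrow> 'a" where
  "Ymn w ini xs m n \<sigma> = iterw w \<sigma> m (nat (n - m + 1)) (xs (ini (\<sigma> m)))"

end

theory Submission
  imports Defs
begin

text \<open>Let \<open>r = \<surd>a\<close>. For \<open>x, y\<close> in a common \<open>K\<^sub>j\<close>, iterating the contraction condition along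
  words gives \<open>E\<^sub>x d(Z\<^sup>x\<^sub>L, Z\<^sup>y\<^sub>L) \<le> a\<^sup>L d(x, y)\<close>, where \<open>E\<^sub>x\<close> is the expectation under the path
  measure started at \<open>x\<close>. By Markov's inequality the event \<open>d(Z\<^sup>x\<^sub>L, Z\<^sup>y\<^sub>L) > r\<^sup>L d(x, y)\<close> has
  probability at most \<open>r\<^sup>L\<close>, so the union of these events over \<open>L > L\<^sub>0\<close> has probability at
  most \<open>r * r\<^bsup>L\<^sub>0\<^esup> / (1 - r) < \<epsilon>\<close> once \<open>L\<^sub>0\<close> is large. Moreover \<open>p\<^bsub>\<sigma>\<^sub>m\<^esub>(x) > 0\<close> almost surely,
  which forces \<open>i(\<sigma>\<^sub>m) = i\<^sub>0\<close>, so that \<open>Y\<close> is the orbit of \<open>x\<^bsub>i\<^sub>0\<^esub>\<close>.\<close>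

definition window :: "(int \<Rightarrow> 'e) \<Rightarrow> int \<Rightarrow> nat \<Rightarrow> 'e list" where
  "window \<sigma> m L = map (\<lambda>j. \<sigma> (m + int j)) [0..<L]"

lemma length_window [simp]: "length (window \<sigma> m L) = L"
  by (simp add: window_def)

lemma iterw_eq_fold: "iterw w \<sigma> m L x = fold w (window \<sigma> m L) x"
  by (induction L) (simp_all add: window_def)

lemma mem_cyl_iff_window: "\<sigma> \<in> cyl m es \<longleftrightarrow> window \<sigma> m (length es) = es"
  unfolding cyl_def window_def list_eq_iff_nth_eq[of "map _ _" es] by simp

lemma window_event_eq_UN_cyl:
  "{\<sigma>. Q (window \<sigma> m L)} = (\<Union>es\<in>{es. length es = L \<and> Q es}. cyl m es)"
  by (auto simp: mem_cyl_iff_window)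

lemma finite_lists_length: "finite {es :: 'e::finite list. length es = L}"
  using finite_lists_length_eq[of "UNIV :: 'e set" L] by simp

lemma sum_lists_length_Suc:
  fixes f :: "'e::finite list \<Rightarrow> 'b::comm_monoid_add"
  shows "(\<Sum>es | length es = Suc L. f es) = (\<Sum>e\<in>UNIV. \<Sum>es | length es = L. f (e # es))"
proof -
  have "{es. length es = Suc L}
      = (\<lambda>(es, e). e # es) ` ({es :: 'e list. length es = L} \<times> UNIV)"
    using lists_length_Suc_eq[of "UNIV :: 'e set" L] by simp
  then have "(\<Sum>es | length es = Suc L. f es)
      = (\<Sum>(es, e) \<in> {es. length es = L} \<times> UNIV. f (e # es))"
    by (simp only: sum.reindex[OF inj_split_Cons]) (auto intro!: sum.cong)
  also have "\<dots> = (\<Sum>e\<in>UNIV. \<Sum>es | length es = L. f (e # es))"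
    by (simp add: sum.cartesian_product[symmetric] sum.swap[of _ "{es. length es = L}"])
  finally show ?thesis .
qed

lemma cyl_in_sets: "sets P = sets (Aalg m) \<Longrightarrow> es \<noteq> [] \<Longrightarrow> cyl m es \<in> sets P"
  by (auto simp: Aalg_def)

lemma window_event_in_sets:
  fixes P :: "(int \<Rightarrow> 'e::finite) measure"
  assumes "sets P = sets (Aalg m)" and "L > 0"
  shows "{\<sigma>. Q (window \<sigma> m L)} \<in> sets P"
  unfolding window_event_eq_UN_cyl using assms
  by (intro sets.finite_UN finite_subset[OF _ finite_lists_length[of L]]) (auto intro: cyl_in_sets)

lemma measure_window_event:
  fixes P :: "(int \<Rightarrow> 'e::finite) measure"
  assumes "finite_measure P" and "sets P = sets (Aalg m)" and "L > 0"
  shows "measure P {\<sigma>. Q (window \<sigma> m L)}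
    = (\<Sum>es | length es = L \<and> Q es. measure P (cyl m es))"
  unfolding window_event_eq_UN_cyl using assms
  by (intro finite_measure.finite_measure_finite_Union finite_subset[OF _ finite_lists_length[of L]])
    (auto intro: cyl_in_sets simp: disjoint_family_on_def mem_cyl_iff_window)

lemma cylprob_nonneg: "(\<And>e y. 0 \<le> p e y) \<Longrightarrow> 0 \<le> cylprob p w x es"
  by (induction es arbitrary: x) auto

lemma measure_cyl_eq_cylprob:
  assumes "emeasure P (cyl m es) = ennreal (cylprob p w x es)" and "\<And>e y. 0 \<le> p e y"
  shows "measure P (cyl m es) = cylprob p w x es"
  using assms by (simp add: measure_def cylprob_nonneg)

lemma
  assumes "cms N ini ter Kset w p a"
  shows cms_ini_range: "ini e \<in> {1..N}"
    and cms_ter_range: "ter e \<in> {1..N}"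
    and cms_maps_into: "x \<in> Kset (ini e) \<Longrightarrow> w e x \<in> Kset (ter e)"
    and cms_p_nonneg: "0 \<le> p e x"
    and cms_p_zero: "x \<notin> Kset (ini e) \<Longrightarrow> p e x = 0"
    and cms_Kset_disjoint: "j \<in> {1..N} \<Longrightarrow> l \<in> {1..N} \<Longrightarrow> j \<noteq> l \<Longrightarrow> Kset j \<inter> Kset l = {}"
    and cms_rate_pos: "0 < a"
    and cms_rate_less_1: "a < 1"
    and cms_contractive: "j \<in> {1..N} \<Longrightarrow> x \<in> Kset j \<Longrightarrow> y \<in> Kset j \<Longrightarrow>
      (\<Sum>e\<in>UNIV. p e x * dist (w e x) (w e y)) \<le> a * dist x y"
  using assms unfolding cms_def by blast+

lemma cms_ini_eq:
  assumes cms: "cms N ini ter Kset w p a" and "j \<in> {1..N}" and "x \<in> Kset j" and "p e x \<noteq> 0"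
  shows "ini e = j"
  using assms cms_p_zero[OF cms] cms_ini_range[OF cms] cms_Kset_disjoint[OF cms] by blast

lemma cms_mean_contraction:
  assumes cms: "cms N ini ter Kset w p a"
  shows "j \<in> {1..N} \<Longrightarrow> x \<in> Kset j \<Longrightarrow> y \<in> Kset j \<Longrightarrow>
    (\<Sum>es | length es = L. cylprob p w x es * dist (fold w es x) (fold w es y)) \<le> a ^ L * dist x y"
proof (induction L arbitrary: x y j)
  case 0
  then show ?case by simp
next
  case (Suc L)
  have step: "p e x * (\<Sum>es | length es = L.
        cylprob p w (w e x) es * dist (fold w es (w e x)) (fold w es (w e y)))
      \<le> p e x * (a ^ L * dist (w e x) (w e y))" for e
  proof (cases "p e x = 0")
    case False
    then have "ini e = j"
      using cms_ini_eq[OF cms Suc.prems(1,2)] by blast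
    then have "ter e \<in> {1..N}" "w e x \<in> Kset (ter e)" "w e y \<in> Kset (ter e)"
      using Suc.prems cms_ter_range[OF cms] cms_maps_into[OF cms] by auto
    from Suc.IH[OF this] show ?thesis
      using cms_p_nonneg[OF cms] by (simp add: mult_left_mono)
  qed simp
  have "(\<Sum>es | length es = Suc L. cylprob p w x es * dist (fold w es x) (fold w es y))
      = (\<Sum>e\<in>UNIV. p e x * (\<Sum>es | length es = L.
          cylprob p w (w e x) es * dist (fold w es (w e x)) (fold w es (w e y))))"
    by (simp add: sum_lists_length_Suc sum_distrib_left mult.assoc)
  also have "\<dots> \<le> (\<Sum>e\<in>UNIV. p e x * (a ^ L * dist (w e x) (w e y)))"
    by (intro sum_mono step)
  also have "\<dots> = a ^ L * (\<Sum>e\<in>UNIV. p e x * dist (w e x) (w e y))"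
    by (simp add: sum_distrib_left algebra_simps)
  also have "\<dots> \<le> a ^ L * (a * dist x y)"
  proof (rule mult_left_mono)
    show "(\<Sum>e\<in>UNIV. p e x * dist (w e x) (w e y)) \<le> a * dist x y"
      using cms_contractive[OF cms Suc.prems] .
    show "0 \<le> a ^ L"
      using cms_rate_pos[OF cms] by simp
  qed
  finally show ?case
    by (simp add: mult.assoc mult.left_commute)
qed

lemma cms_markov_dist:
  fixes P :: "(int \<Rightarrow> 'e::finite) measure"
  assumes cms: "cms N ini ter Kset w p a"
    and P: "finite_measure P" "sets P = sets (Aalg m)"
    and P_cyl: "\<And>es. es \<noteq> [] \<Longrightarrow> emeasure P (cyl m es) = ennreal (cylprob p w x es)"
    and j: "j \<in> {1..N}" "x \<in> Kset j" "y \<in> Kset j" and "0 < L" and "0 \<le> t"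
  shows "t * measure P {\<sigma>. t < dist (iterw w \<sigma> m L x) (iterw w \<sigma> m L y)} \<le> a ^ L * dist x y"
proof -
  let ?c = "cylprob p w x" and ?f = "\<lambda>es. dist (fold w es x) (fold w es y)"
  have c_nonneg: "0 \<le> ?c es" for es
    by (rule cylprob_nonneg) (rule cms_p_nonneg[OF cms])
  have "measure P {\<sigma>. t < dist (iterw w \<sigma> m L x) (iterw w \<sigma> m L y)}
      = (\<Sum>es | length es = L \<and> t < ?f es. measure P (cyl m es))"
    unfolding iterw_eq_fold by (rule measure_window_event[OF P \<open>0 < L\<close>])
  also have "\<dots> = (\<Sum>es | length es = L \<and> t < ?f es. ?c es)"
    using \<open>0 < L\<close> by (intro sum.cong refl measure_cyl_eq_cylprob P_cyl cms_p_nonneg[OF cms]) auto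
  finally have "t * measure P {\<sigma>. t < dist (iterw w \<sigma> m L x) (iterw w \<sigma> m L y)}
      = (\<Sum>es | length es = L \<and> t < ?f es. ?c es * t)"
    by (simp add: sum_distrib_left mult.commute)
  also have "\<dots> \<le> (\<Sum>es | length es = L \<and> t < ?f es. ?c es * ?f es)"
    using c_nonneg by (intro sum_mono mult_left_mono) auto
  also have "\<dots> \<le> (\<Sum>es | length es = L. ?c es * ?f es)"
    using c_nonneg by (intro sum_mono2 finite_lists_length) auto
  also have "\<dots> \<le> a ^ L * dist x y"
    using cms_mean_contraction[OF cms j] .
  finally show ?thesis .
qed

lemma measure_UN_le_geometric:
  assumes "finite_measure M" and "\<And>j. A j \<in> sets M" and "\<And>j. measure M (A j) \<le> c * r ^ j"
    and "0 \<le> r" and "r < 1"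
  shows "measure M (\<Union>j. A j) \<le> c / (1 - r)"
proof -
  have geom: "(\<lambda>j. c * r ^ j) sums (c / (1 - r))"
    using sums_mult[OF geometric_sums, of r c] assms(4,5) by simp
  have summable: "summable (\<lambda>j. measure M (A j))"
    using assms(3) by (intro summable_comparison_test[OF _ sums_summable[OF geom]]) auto
  have "measure M (\<Union>j. A j) \<le> (\<Sum>j. measure M (A j))"
    using assms(1,2) summable by (intro finite_measure.finite_measure_subadditive_countably) auto
  also have "\<dots> \<le> (\<Sum>j. c * r ^ j)"
    using assms(3) summable sums_summable[OF geom] by (rule suminf_le)
  also have "\<dots> = c / (1 - r)"
    using geom by (simp add: sums_iff)
  finally show ?thesis .
qed

lemma cms_orbit_distance_decay:
  fixes P :: "(int \<Rightarrow> 'e::finite) measure"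
  assumes cms: "cms N ini ter Kset w p a"
    and P: "finite_measure P" "sets P = sets (Aalg m)"
    and P_cyl: "\<And>es. es \<noteq> [] \<Longrightarrow> emeasure P (cyl m es) = ennreal (cylprob p w x es)"
    and j: "j \<in> {1..N}" "x \<in> Kset j" "y \<in> Kset j" and "0 < \<epsilon>"
  shows "\<exists>L\<^sub>0. \<exists>B\<in>sets P. measure P B < \<epsilon> \<and>
    (\<forall>\<sigma>\<in>UNIV - B. \<forall>L>L\<^sub>0.
      dist (iterw w \<sigma> m L x) (iterw w \<sigma> m L y) \<le> sqrt a ^ L * dist x y)"
proof -
  define r where "r = sqrt a"
  have r: "0 < r" "r < 1" and a_eq: "a = r * r"
    using cms_rate_pos[OF cms] cms_rate_less_1[OF cms] by (simp_all add: r_def)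
  obtain L\<^sub>0 where L\<^sub>0: "r ^ L\<^sub>0 < \<epsilon> * (1 - r)"
    using real_arch_pow_inv[of "\<epsilon> * (1 - r)" r] \<open>0 < \<epsilon>\<close> r by auto
  define A where "A i = {\<sigma>. r ^ (Suc L\<^sub>0 + i) * dist x y
    < dist (iterw w \<sigma> m (Suc L\<^sub>0 + i) x) (iterw w \<sigma> m (Suc L\<^sub>0 + i) y)}" for i
  have A_sets: "A i \<in> sets P" for i
    unfolding A_def iterw_eq_fold by (rule window_event_in_sets[OF P(2)]) simp
  have A_measure: "measure P (A i) \<le> r ^ Suc L\<^sub>0 * r ^ i" for i
  proof (cases "x = y")
    case False
    let ?L = "Suc L\<^sub>0 + i"
    have "r ^ ?L * dist x y * measure P (A i) \<le> a ^ ?L * dist x y"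
      unfolding A_def using r by (intro cms_markov_dist[OF cms P P_cyl j]) auto
    also have "\<dots> = r ^ ?L * dist x y * r ^ ?L"
      by (simp add: a_eq power_mult_distrib)
    finally have "measure P (A i) \<le> r ^ ?L"
      using False r by (simp add: mult_le_cancel_left_pos)
    then show ?thesis
      by (simp add: power_add)
  qed (use r in \<open>simp add: A_def\<close>)
  have "measure P (\<Union>i. A i) \<le> r ^ Suc L\<^sub>0 / (1 - r)"
    using r by (intro measure_UN_le_geometric[OF P(1) A_sets A_measure]) auto
  also have "\<dots> \<le> r ^ L\<^sub>0 / (1 - r)"
    using r by (intro divide_right_mono) (auto simp: mult_left_le_one_le)
  also have "\<dots> < \<epsilon>"
    using L\<^sub>0 r by (simp add: pos_divide_less_eq)
  finally have "measure P (\<Union>i. A i) < \<epsilon>" .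
  moreover have "dist (iterw w \<sigma> m L x) (iterw w \<sigma> m L y) \<le> r ^ L * dist x y"
    if "\<sigma> \<notin> (\<Union>i. A i)" and "L\<^sub>0 < L" for \<sigma> L
  proof -
    obtain i where L_eq: "L = Suc L\<^sub>0 + i"
      using \<open>L\<^sub>0 < L\<close> less_iff_Suc_add by auto
    have "\<sigma> \<notin> A i"
      using that(1) by blast
    then show ?thesis
      unfolding A_def L_eq by (simp only: mem_Collect_eq not_less)
  qed
  moreover have "(\<Union>i. A i) \<in> sets P"
    using A_sets by auto
  ultimately show ?thesis
    unfolding r_def by blast
qed

lemma first_edge_null_event:
  fixes P :: "(int \<Rightarrow> 'e::finite) measure"
  assumes P: "finite_measure P" "sets P = sets (Aalg m)"
    and P_cyl: "\<And>es. es \<noteq> [] \<Longrightarrow> emeasure P (cyl m es) = ennreal (cylprob p w x es)"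
    and p_nonneg: "\<And>e y. 0 \<le> p e y"
  shows "{\<sigma>. p (\<sigma> m) x = 0} \<in> sets P" and "measure P {\<sigma>. p (\<sigma> m) x = 0} = 0"
proof -
  have event_eq: "{\<sigma>. p (\<sigma> m) x = 0} = {\<sigma>. p (hd (window \<sigma> m 1)) x = 0}"
    by (simp add: window_def)
  show "{\<sigma>. p (\<sigma> m) x = 0} \<in> sets P"
    unfolding event_eq by (rule window_event_in_sets[OF P(2)]) simp
  have "measure P {\<sigma>. p (\<sigma> m) x = 0}
      = (\<Sum>es | length es = 1 \<and> p (hd es) x = 0. measure P (cyl m es))"
    unfolding event_eq by (rule measure_window_event[OF P]) simp
  also have "\<dots> = 0"
    using p_nonneg by (intro sum.neutral) (auto simp: measure_cyl_eq_cylprob[OF P_cyl] length_Suc_conv)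
  finally show "measure P {\<sigma>. p (\<sigma> m) x = 0} = 0" .
qed

lemma powr_half_eq_sqrt_power: "0 < a \<Longrightarrow> a powr (real n / 2) = sqrt a ^ n"
  by (simp add: powr_half_sqrt_powr powr_realpow real_sqrt_power)

lemma Ymn_eq_Zmn: "ini (\<sigma> m) = i \<Longrightarrow> Ymn w ini xs m n \<sigma> = Zmn w (xs i) m n \<sigma>"
  by (simp add: Ymn_def Zmn_def)

theorem lemma5:
  fixes N :: nat and ini ter :: "'e::finite \<Rightarrow> nat" and Kset :: "nat \<Rightarrow> 'a::complete_space set"
    and w :: "'e \<Rightarrow> 'a \<Rightarrow> 'a" and p :: "'e \<Rightarrow> 'a \<Rightarrow> real" and a :: real
    and xs :: "nat \<Rightarrow> 'a" and x :: 'a and i0 :: nat and m :: int and \<epsilon> :: real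
    and P :: "(int \<Rightarrow> 'e) measure"
  assumes "cms N ini ter Kset w p a"
    and "\<forall>i\<in>{1..N}. xs i \<in> Kset i"
    and "i0 \<in> {1..N}" and "x \<in> Kset i0"
    and "m \<le> 0" and "\<epsilon> > 0"
    and "prob_space P" and "sets P = sets (Aalg m)"
    and "\<forall>es. es \<noteq> [] \<longrightarrow> emeasure P (cyl m es) = ennreal (cylprob p w x es)"
  shows "\<exists>k\<ge>m. \<exists>B\<in>sets (Aalg m). measure P B < \<epsilon> \<and>
           (\<forall>\<sigma>\<in>UNIV - B. \<forall>n\<ge>k.
              dist (Zmn w x m n \<sigma>) (Ymn w ini xs m n \<sigma>)
                \<le> a powr (real_of_int (n - m + 1) / 2) * dist x (xs i0))"
proof -
  note cms = assms(1)
  have P: "finite_measure P" "sets P = sets (Aalg m)"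
    using assms(7,8) by (simp_all add: prob_space.finite_measure)
  have P_cyl: "\<And>es. es \<noteq> [] \<Longrightarrow> emeasure P (cyl m es) = ennreal (cylprob p w x es)"
    using assms(9) by blast
  obtain L\<^sub>0 B where B: "B \<in> sets P" "measure P B < \<epsilon>" and decay:
    "\<And>\<sigma> L. \<sigma> \<notin> B \<Longrightarrow> L\<^sub>0 < L \<Longrightarrow>
      dist (iterw w \<sigma> m L x) (iterw w \<sigma> m L (xs i0)) \<le> sqrt a ^ L * dist x (xs i0)"
    using cms_orbit_distance_decay[OF cms P P_cyl assms(3,4) _ assms(6), of "xs i0"] assms(2,3)
    by blast
  define B\<^sub>0 where "B\<^sub>0 = {\<sigma>. p (\<sigma> m) x = 0}"
  have B\<^sub>0: "B\<^sub>0 \<in> sets P" "measure P B\<^sub>0 = 0"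
    using first_edge_null_event[OF P P_cyl cms_p_nonneg[OF cms]] unfolding B\<^sub>0_def by blast+
  have "measure P (B \<union> B\<^sub>0) < \<epsilon>"
    using measure_Un_le[OF B(1) B\<^sub>0(1)] B(2) B\<^sub>0(2) by simp
  moreover have "dist (Zmn w x m n \<sigma>) (Ymn w ini xs m n \<sigma>)
      \<le> a powr (real_of_int (n - m + 1) / 2) * dist x (xs i0)"
    if "\<sigma> \<notin> B \<union> B\<^sub>0" and "m + int L\<^sub>0 \<le> n" for \<sigma> n
  proof -
    have "ini (\<sigma> m) = i0"
      using that(1) cms_ini_eq[OF cms assms(3,4)] unfolding B\<^sub>0_def by blast
    moreover have "a powr (real_of_int (n - m + 1) / 2) = sqrt a ^ nat (n - m + 1)"
      using that(2) powr_half_eq_sqrt_power[OF cms_rate_pos[OF cms], of "nat (n - m + 1)"] by simp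
    moreover have "L\<^sub>0 < nat (n - m + 1)"
      using that(2) by simp
    ultimately show ?thesis
      using decay[of \<sigma> "nat (n - m + 1)"] that(1) by (simp add: Ymn_eq_Zmn Zmn_def)
  qed
  ultimately show ?thesis
    using B(1) B\<^sub>0(1) P(2) by (intro exI[of _ "m + int L\<^sub>0"]) auto
qed

end
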